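(* Let $\Lambda$ be an ordinal with $2\leq\Lambda\leq\omega$. Then there is a family $\langle a(n,v,i): n\in\omega,\ v\in{}^{2n}\omega,\ i\in\Lambda\cap(n+1)\rangle$ such that (a1) $a(n,v,i)\in{}^{n}\omega$ for all $n\in\omega$, $v\in{}^{2n}\omega$, $i\in\Lambda\cap(n+1)$; (a2) for all $n\in\omega$, $v\in{}^{2n}\omega$ and $m\in\omega$, $$\Big(\big(\prod_{i\in\Lambda\cap(n+1)}\widetilde{\mathbf{S}}^{m}_{a(n,v,i)}\big)\setminus\big(\prod_{i\in\Lambda\cap(n+1)}\widetilde{\mathbf{S}}^{m+1}_{a(n,v,i)}\big)\Big)\cdot{}^{\Lambda\cap\{n+1\}}({}^{\omega}\omega)$$ is the union of the pairwise disjoint sets $\prod_{i\in\Lambda\cap(n+2)}\mathbf{S}_{a(n+1,v^\frown\langle m,l\rangle,i)}$, $l\in\omega$.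
   Context: Ordinals are von Neumann ordinals: $n=\{0,\dots,n-1\}$, $\omega=\{0,1,2,\dots\}$. ${}^{B}A$ is the set of all functions from $B$ to $A$ (so ${}^{\varnothing}A=\{\varnothing\}$); ${}^{n}\omega$ is the set of sequences of natural numbers of length $n$; $v^\frown\langle m,l\rangle$ is the sequence $v$ extended by the two terms $m,l$. For $x\in{}^{<\omega}\omega$, $\mathbf{S}_x=\{p\in{}^{\omega}\omega: x\subseteq p\}$ (infinite sequences extending $x$), and for $m\in\omega$, $\widetilde{\mathbf{S}}^{m}_{x}=\bigcup\{\mathbf{S}_{x^\frown\langle l\rangle}: l\in\omega\setminus m\}$. For an index set $I$, $\prod_{i\in I}D_i$ is the set of functions $p$ with domain $I$ and $p(i)\in D_i$ for all $i\in I$. For sets of functions $E\subseteq{}^{A}C$, $F\subseteq{}^{B}C$ with $A\cap B=\varnothing$, $E\cdot F=\{e\cup f: e\in E,\ f\in F\}$, i.e. the set of $p\in{}^{A\cup B}C$ with $p\restriction A\in E$ and $p\restriction B\in F$. *)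

theory Defs
  imports Main "HOL-Library.FuncSet" "HOL-Library.Extended_Nat" "HOL-Library.Disjoint_Sets"
begin

text \<open>Finite sequences of naturals are lists; infinite sequences are functions nat => nat.\<close>

definition Sbase :: "nat list \<Rightarrow> (nat \<Rightarrow> nat) set" where
  "Sbase x = {p. \<forall>k < length x. p k = x ! k}"

definition Stilde :: "nat \<Rightarrow> nat list \<Rightarrow> (nat \<Rightarrow> nat) set" where
  "Stilde m x = (\<Union>l \<in> {m..}. Sbase (x @ [l]))"

text \<open>Lambda (2 <= Lambda <= omega) is an extended natural; Lambda \<inter> (n+1) and Lambda \<inter> {n+1}.\<close>
definition Idx :: "enat \<Rightarrow> nat \<Rightarrow> nat set" where
  "Idx L n = {i. enat i < L \<and> i \<le> n}"

definition Idx1 :: "enat \<Rightarrow> nat \<Rightarrow> nat set" where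
  "Idx1 L n = {i. enat i < L \<and> i = n + 1}"

text \<open>E \<cdot> F for E over domain A, F over domain B (A, B disjoint): functions on A \<union> B
  whose restrictions lie in E and F respectively (extensional convention of FuncSet).\<close>
definition dotp :: "('a \<Rightarrow> 'b) set \<Rightarrow> 'a set \<Rightarrow> ('a \<Rightarrow> 'b) set \<Rightarrow> 'a set \<Rightarrow> ('a \<Rightarrow> 'b) set" where
  "dotp E A F B = {p. p \<in> extensional (A \<union> B) \<and> restrict p A \<in> E \<and> restrict p B \<in> F}"

end

theory Submission
  imports Defs "HOL-Library.Countable_Set"
begin

text \<open>The set in (a2) consists of the points \<open>p\<close> whose \<open>i\<close>-th coordinate extends
  \<open>a(n,v,i)\<close> and has entry \<open>\<ge> m\<close> at position \<open>n\<close>, with equality for some \<open>i\<close>. Membership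
  depends only on the initial segments of length \<open>n + 1\<close> of the coordinates, and each point lies in
  exactly one product of cylinders \<open>\<Pi> i. Sbase (d i)\<close> with all \<open>d i\<close> of length \<open>n + 1\<close>,
  namely the one given by its own initial segments. Hence the set is the disjoint union of these
  products over the countable set of labels \<open>d\<close> that occur. This set of labels is infinite, since
  coordinate 0 may attain the minimum \<open>m\<close> at position \<open>n\<close> while coordinate 1 takes any larger
  value there; enumerating it by \<open>l \<in> \<omega>\<close> and letting \<open>a(n+1, v @ [m, l])\<close> be the \<open>l\<close>-th label
  gives the family.\<close>

lemma Sbase_iff_map: "p \<in> Sbase x \<longleftrightarrow> map p [0..<length x] = x"
  unfolding Sbase_def mem_Collect_eq
proof
  assume "\<forall>k<length x. p k = x ! k"
  then show "map p [0..<length x] = x" by (auto intro: map_upt_eqI)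
next
  assume map: "map p [0..<length x] = x"
  show "\<forall>k<length x. p k = x ! k"
  proof (intro allI impI)
    fix k assume "k < length x"
    then have "map p [0..<length x] ! k = p k" by simp
    then show "p k = x ! k" by (simp only: map)
  qed
qed

lemma Sbase_snoc: "p \<in> Sbase (x @ [l]) \<longleftrightarrow> p \<in> Sbase x \<and> p (length x) = l"
  unfolding Sbase_def by (auto simp: nth_append less_Suc_eq)

lemma Stilde_iff: "p \<in> Stilde m x \<longleftrightarrow> p \<in> Sbase x \<and> m \<le> p (length x)"
  unfolding Stilde_def by (auto simp: Sbase_snoc)

definition initial_segments :: "nat \<Rightarrow> 'i set \<Rightarrow> ('i \<Rightarrow> nat \<Rightarrow> 'a) \<Rightarrow> 'i \<Rightarrow> 'a list" where
  "initial_segments k I p = (\<lambda>i\<in>I. map (p i) [0..<k])"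

lemma initial_segments_extensional [simp]: "initial_segments k I p \<in> extensional I"
  by (simp add: initial_segments_def)

lemma length_initial_segments [simp]: "i \<in> I \<Longrightarrow> length (initial_segments k I p i) = k"
  by (simp add: initial_segments_def)

lemma PiE_Sbase_iff:
  assumes "d \<in> extensional I" and "\<And>i. i \<in> I \<Longrightarrow> length (d i) = k"
  shows "p \<in> (\<Pi>\<^sub>E i\<in>I. Sbase (d i)) \<longleftrightarrow> p \<in> extensional I \<and> initial_segments k I p = d"
  using assms unfolding initial_segments_def PiE_iff Sbase_iff_map
  by (auto simp: fun_eq_iff extensional_def)

lemma disjoint_family_on_PiE_Sbase:
  assumes "D \<subseteq> {d \<in> extensional I. \<forall>i\<in>I. length (d i) = k}"
  shows "disjoint_family_on (\<lambda>d. \<Pi>\<^sub>E i\<in>I. Sbase (d i)) D"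
  unfolding disjoint_family_on_def
proof (intro ballI impI)
  fix d d' assume "d \<in> D" "d' \<in> D" "d \<noteq> d'"
  with assms show "(\<Pi>\<^sub>E i\<in>I. Sbase (d i)) \<inter> (\<Pi>\<^sub>E i\<in>I. Sbase (d' i)) = {}"
    by (auto simp: PiE_Sbase_iff subset_iff)
qed

lemma saturated_eq_UN_PiE_Sbase:
  assumes "T \<subseteq> extensional I"
    and "\<And>p q. p \<in> T \<Longrightarrow> q \<in> extensional I \<Longrightarrow>
           initial_segments k I q = initial_segments k I p \<Longrightarrow> q \<in> T"
  shows "T = (\<Union>d \<in> initial_segments k I ` T. \<Pi>\<^sub>E i\<in>I. Sbase (d i))"
proof -
  have cell: "p \<in> (\<Pi>\<^sub>E i\<in>I. Sbase (initial_segments k I q i)) \<longleftrightarrow>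
        p \<in> extensional I \<and> initial_segments k I p = initial_segments k I q" for p q
    by (rule PiE_Sbase_iff) simp_all
  show ?thesis
  proof (intro equalityI subsetI)
    fix p assume p: "p \<in> T"
    then have "p \<in> (\<Pi>\<^sub>E i\<in>I. Sbase (initial_segments k I p i))"
      using assms(1) cell by blast
    with p show "p \<in> (\<Union>d \<in> initial_segments k I ` T. \<Pi>\<^sub>E i\<in>I. Sbase (d i))"
      by blast
  next
    fix p assume "p \<in> (\<Union>d \<in> initial_segments k I ` T. \<Pi>\<^sub>E i\<in>I. Sbase (d i))"
    then obtain q where "q \<in> T" and "p \<in> (\<Pi>\<^sub>E i\<in>I. Sbase (initial_segments k I q i))"
      by blast
    then show "p \<in> T"
      using assms(2) cell by blast
  qed
qed

lemma UN_from_nat_into: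
  assumes "countable D" "D \<noteq> {}"
  shows "(\<Union>l. B (from_nat_into D l)) = (\<Union>d\<in>D. B d)"
  using assms by (metis image_image range_from_nat_into)

lemma disjoint_family_from_nat_into:
  assumes "countable D" "infinite D" "disjoint_family_on B D"
  shows "disjoint_family (\<lambda>l. B (from_nat_into D l))"
proof -
  have "inj (from_nat_into D)" "range (from_nat_into D) = D"
    using bij_betw_from_nat_into[OF assms(1,2)] by (auto simp: bij_betw_def)
  with assms(3) show ?thesis
    unfolding disjoint_family_on_def by (metis injD rangeI)
qed

lemma countable_extensional:
  assumes "finite (I :: nat set)"
  shows "countable (extensional I :: (nat \<Rightarrow> 'a::countable) set)"
proof (rule countable_subset)
  obtain N where N: "I \<subseteq> {..<N}"
    using assms finite_nat_bounded by blast
  show "extensional I \<subseteq> range (\<lambda>xs. \<lambda>i\<in>I. xs ! i :: 'a)"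
  proof
    fix f :: "nat \<Rightarrow> 'a" assume "f \<in> extensional I"
    moreover have "(\<lambda>i\<in>I. map f [0..<N] ! i) = restrict f I"
      using N by (auto simp: fun_eq_iff)
    ultimately show "f \<in> range (\<lambda>xs. \<lambda>i\<in>I. xs ! i)"
      by (metis extensional_restrict rangeI)
  qed
qed simp

lemma finite_Idx: "finite (Idx L n)"
  unfolding Idx_def by auto

lemma Idx_subset_Suc: "Idx L n \<subseteq> Idx L (Suc n)"
  unfolding Idx_def by auto

lemma Idx_Suc: "Idx L (Suc n) = Idx L n \<union> Idx1 L n"
  unfolding Idx_def Idx1_def by auto

lemma below_two_in_Idx:
  assumes "2 \<le> L" "i < 2" "i \<le> n"
  shows "i \<in> Idx L n"
proof -
  have "enat i < 2"
    using assms(2) by (simp add: numeral_eq_enat)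
  then have "enat i < L"
    using assms(1) by (rule less_le_trans)
  with assms(3) show ?thesis
    unfolding Idx_def by simp
qed

definition level_set :: "enat \<Rightarrow> nat \<Rightarrow> (nat \<Rightarrow> nat list) \<Rightarrow> nat \<Rightarrow> (nat \<Rightarrow> nat \<Rightarrow> nat) set" where
  "level_set L n b m =
     dotp ((\<Pi>\<^sub>E i \<in> Idx L n. Stilde m (b i)) - (\<Pi>\<^sub>E i \<in> Idx L n. Stilde (m + 1) (b i)))
       (Idx L n) (\<Pi>\<^sub>E i \<in> Idx1 L n. UNIV) (Idx1 L n)"

lemma level_set_iff:
  "p \<in> level_set L n b m \<longleftrightarrow>
     p \<in> extensional (Idx L (Suc n)) \<and>
     (\<forall>i\<in>Idx L n. p i \<in> Sbase (b i) \<and> m \<le> p i (length (b i))) \<and>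
     (\<exists>i\<in>Idx L n. p i (length (b i)) = m)"
proof -
  have box: "restrict p (Idx L n) \<in> (\<Pi>\<^sub>E i\<in>Idx L n. Stilde k (b i)) \<longleftrightarrow>
      (\<forall>i\<in>Idx L n. p i \<in> Sbase (b i) \<and> k \<le> p i (length (b i)))" for k
    by (simp add: restrict_PiE_iff Pi_iff Stilde_iff)
  have "p \<in> level_set L n b m \<longleftrightarrow>
     p \<in> extensional (Idx L (Suc n)) \<and>
     (\<forall>i\<in>Idx L n. p i \<in> Sbase (b i) \<and> m \<le> p i (length (b i))) \<and>
     \<not> (\<forall>i\<in>Idx L n. p i \<in> Sbase (b i) \<and> m + 1 \<le> p i (length (b i)))"
    unfolding level_set_def dotp_def Idx_Suc Diff_iff mem_Collect_eq box by simp
  then show ?thesis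
    by (auto intro: le_antisym simp: not_less_eq_eq)
qed

lemma level_set_saturated:
  assumes len: "\<And>i. i \<in> Idx L n \<Longrightarrow> length (b i) = n"
    and p: "p \<in> level_set L n b m" and q: "q \<in> extensional (Idx L (Suc n))"
    and same: "initial_segments (Suc n) (Idx L (Suc n)) q = initial_segments (Suc n) (Idx L (Suc n)) p"
  shows "q \<in> level_set L n b m"
proof -
  have agree: "q i j = p i j" if "i \<in> Idx L n" "j \<le> n" for i j
  proof -
    have "i \<in> Idx L (Suc n)" using that Idx_subset_Suc by blast
    then have "map (q i) [0..<Suc n] = map (p i) [0..<Suc n]"
      using fun_cong[OF same, of i] by (simp add: initial_segments_def)
    with that(2) show ?thesis by (auto simp del: upt_Suc)
  qed
  have "q i \<in> Sbase (b i) \<longleftrightarrow> p i \<in> Sbase (b i)" "q i n = p i n" if "i \<in> Idx L n" for i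
    using that agree len[OF that] by (auto simp: Sbase_def)
  with p q len show ?thesis by (auto simp: level_set_iff)
qed

definition level_labels :: "enat \<Rightarrow> nat \<Rightarrow> (nat \<Rightarrow> nat list) \<Rightarrow> nat \<Rightarrow> (nat \<Rightarrow> nat list) set" where
  "level_labels L n b m = initial_segments (Suc n) (Idx L (Suc n)) ` level_set L n b m"

lemma countable_level_labels: "countable (level_labels L n b m)"
proof (rule countable_subset)
  show "level_labels L n b m \<subseteq> extensional (Idx L (Suc n))"
    by (auto simp: level_labels_def)
qed (simp add: countable_extensional finite_Idx)

lemma infinite_level_labels:
  assumes "2 \<le> L" and len: "\<And>i. i \<in> Idx L n \<Longrightarrow> length (b i) = n"
  shows "infinite (level_labels L n b m)"
proof -
  define pt where
    "pt k = (\<lambda>i\<in>Idx L (Suc n). \<lambda>j. if j < n then b i ! j else if i = 0 then m else m + k)" for k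
  let ?label = "\<lambda>k. initial_segments (Suc n) (Idx L (Suc n)) (pt k)"
  have zero: "0 \<in> Idx L n" and one: "1 \<in> Idx L (Suc n)"
    using below_two_in_Idx[OF assms(1)] by auto
  have "pt k \<in> level_set L n b m" for k
  proof -
    have "pt k \<in> extensional (Idx L (Suc n))"
      by (simp add: pt_def)
    moreover have "pt k i \<in> Sbase (b i) \<and> m \<le> pt k i (length (b i))" if "i \<in> Idx L n" for i
      using that Idx_subset_Suc len[OF that] by (auto simp: pt_def Sbase_def)
    moreover have "pt k 0 (length (b 0)) = m"
      using zero Idx_subset_Suc len[OF zero] by (auto simp: pt_def)
    ultimately show ?thesis
      unfolding level_set_iff using zero by blast
  qed
  then have "range ?label \<subseteq> level_labels L n b m"
    by (auto simp: level_labels_def)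
  moreover have "inj ?label"
  proof (rule injI)
    fix k k' assume "?label k = ?label k'"
    then have "?label k 1 ! n = ?label k' 1 ! n" by simp
    with one show "k = k'" by (simp add: initial_segments_def pt_def del: upt_Suc)
  qed
  ultimately show ?thesis
    using range_inj_infinite infinite_super by blast
qed

lemma level_set_partition:
  fixes m :: nat
  assumes L: "2 \<le> L" and len: "\<And>i. i \<in> Idx L n \<Longrightarrow> length (b i) = n"
  defines "cell \<equiv> \<lambda>l. \<Pi>\<^sub>E i\<in>Idx L (Suc n). Sbase (from_nat_into (level_labels L n b m) l i)"
  shows "level_set L n b m = (\<Union>l. cell l)" and "disjoint_family cell"
proof -
  let ?D = "level_labels L n b m"
  have countable: "countable ?D"
    by (rule countable_level_labels)
  have infinite: "infinite ?D"
    by (rule infinite_level_labels[OF L len])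
  have "level_set L n b m = (\<Union>d\<in>?D. \<Pi>\<^sub>E i\<in>Idx L (Suc n). Sbase (d i))"
    unfolding level_labels_def
  proof (rule saturated_eq_UN_PiE_Sbase)
    show "level_set L n b m \<subseteq> extensional (Idx L (Suc n))"
      by (auto simp: level_set_iff)
  qed (rule level_set_saturated[OF len])
  also have "\<dots> = (\<Union>l. cell l)"
    unfolding cell_def
    by (rule UN_from_nat_into[OF countable infinite_imp_nonempty[OF infinite], symmetric])
  finally show "level_set L n b m = (\<Union>l. cell l)" .
  have "disjoint_family_on (\<lambda>d. \<Pi>\<^sub>E i\<in>Idx L (Suc n). Sbase (d i)) ?D"
    by (rule disjoint_family_on_PiE_Sbase) (auto simp: level_labels_def)
  then show "disjoint_family cell"
    unfolding cell_def by (rule disjoint_family_from_nat_into[OF countable infinite])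
qed

fun cell_base :: "enat \<Rightarrow> nat \<Rightarrow> nat list \<Rightarrow> nat \<Rightarrow> nat list" where
  "cell_base L 0 v = (\<lambda>i. [])"
| "cell_base L (Suc n) v =
     from_nat_into (level_labels L n (cell_base L n (take (2 * n) v)) (v ! (2 * n))) (v ! Suc (2 * n))"

lemma length_cell_base:
  assumes "2 \<le> L"
  shows "i \<in> Idx L n \<Longrightarrow> length (cell_base L n v i) = n"
proof (induction n arbitrary: v i)
  case 0
  show ?case by simp
next
  case (Suc n)
  let ?D = "level_labels L n (cell_base L n (take (2 * n) v)) (v ! (2 * n))"
  have "infinite ?D"
    by (rule infinite_level_labels[OF assms Suc.IH])
  then have "?D \<noteq> {}" by auto
  then have "from_nat_into ?D (v ! Suc (2 * n)) \<in> ?D" by (rule from_nat_into)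
  with Suc.prems show ?case by (auto simp: level_labels_def)
qed

lemma cell_base_Suc_append:
  "length v = 2 * n \<Longrightarrow>
     cell_base L (Suc n) (v @ [m, l]) = from_nat_into (level_labels L n (cell_base L n v) m) l"
  by (simp add: nth_append)

theorem lemma11:
  fixes L :: enat
  assumes "2 \<le> L"
  shows "\<exists>a :: nat \<Rightarrow> nat list \<Rightarrow> nat \<Rightarrow> nat list.
    (\<forall>n v i. length v = 2 * n \<and> i \<in> Idx L n \<longrightarrow> length (a n v i) = n) \<and>
    (\<forall>n v m. length v = 2 * n \<longrightarrow>
       dotp ((\<Pi>\<^sub>E i \<in> Idx L n. Stilde m (a n v i)) - (\<Pi>\<^sub>E i \<in> Idx L n. Stilde (m + 1) (a n v i)))
            (Idx L n) (\<Pi>\<^sub>E i \<in> Idx1 L n. UNIV) (Idx1 L n)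
         = (\<Union>l. \<Pi>\<^sub>E i \<in> Idx L (n + 1). Sbase (a (n + 1) (v @ [m, l]) i))
       \<and> disjoint_family (\<lambda>l. \<Pi>\<^sub>E i \<in> Idx L (n + 1). Sbase (a (n + 1) (v @ [m, l]) i)))"
proof -
  have partition:
    "level_set L n (cell_base L n v) m = (\<Union>l. \<Pi>\<^sub>E i \<in> Idx L (Suc n). Sbase (cell_base L (Suc n) (v @ [m, l]) i))
     \<and> disjoint_family (\<lambda>l. \<Pi>\<^sub>E i \<in> Idx L (Suc n). Sbase (cell_base L (Suc n) (v @ [m, l]) i))"
    if "length v = 2 * n" for n v m
  proof -
    have len: "\<And>i. i \<in> Idx L n \<Longrightarrow> length (cell_base L n v i) = n"
      by (rule length_cell_base[OF assms])
    show ?thesis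
      unfolding cell_base_Suc_append[OF that]
      by (intro conjI level_set_partition[OF assms len])
  qed
  show ?thesis
    unfolding level_set_def[symmetric] unfolding Suc_eq_plus1[symmetric]
    by (intro exI[of _ "cell_base L"] conjI allI impI)
      (simp_all add: length_cell_base[OF assms] partition del: cell_base.simps)
qed

end
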